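(* Let $k\ge1$, let $\Gamma=\mathbb{Z}_2\,\mathrm{wr}\,\mathbb{Z}^k=\Sigma\rtimes_\alpha\mathbb{Z}^k$ with $\Sigma=\bigoplus_{x\in\mathbb{Z}^k}(\mathbb{Z}_2)_{(x)}$, and let $\phi:\Gamma\to\Gamma$ be an automorphism, with restriction $\phi'=\phi|_\Sigma:\Sigma\to\Sigma$. Write $\phi'(\delta_0)=\delta_{x(1)}+\dots+\delta_{x(n)}$ with distinct $x(1),\dots,x(n)\in\mathbb{Z}^k$. Then $n=1$. Moreover, $\phi'$ permutes the set $\{\delta_x : x\in\mathbb{Z}^k\}$.
   Context: $\mathbb{Z}_2\,\mathrm{wr}\,\mathbb{Z}^k$ is the semidirect product $\Sigma\rtimes_\alpha\mathbb{Z}^k$, where $\Sigma=\bigoplus_{x\in\mathbb{Z}^k}(\mathbb{Z}_2)_{(x)}$ (finitely supported), each $(\mathbb{Z}_2)_{(x)}\cong\mathbb{Z}_2$ has nontrivial element $\delta_x$, and $\alpha(y)(\delta_x)=\delta_{y+x}$ for $y\in\mathbb{Z}^k$. The subgroup $\Sigma$ is the torsion subgroup of $\Gamma$, hence characteristic, so $\phi(\Sigma)=\Sigma$. *)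

theory Defs
  imports "HOL-Analysis.Finite_Cartesian_Product" "HOL-Algebra.Group"
begin

text \<open>Z^k is int ^ 'n for a finite index type 'n
  (k = CARD('n) \<ge> 1).  An element of Sigma = finitely supported Z_2-valued functions on Z^k
  is represented by its (finite) support set; addition in Sigma is symmetric difference.
  An element of Gamma is a pair (s, y) with s in Sigma and y in Z^k, and
  (s, y) (t, z) = (s + alpha(y) t, y + z), where alpha(y) translates supports by y.\<close>

type_synonym 'n lamp = "(int ^ 'n) set \<times> (int ^ 'n)"

definition symdiff :: "'a set \<Rightarrow> 'a set \<Rightarrow> 'a set" where
  "symdiff A B = (A - B) \<union> (B - A)"

definition lamplighter :: "('n::finite lamp) monoid" where
  "lamplighter = \<lparr> carrier = {p. finite (fst p)},
     mult = (\<lambda>a b. (symdiff (fst a) ((\<lambda>x. snd a + x) ` fst b), snd a + snd b)),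
     one = ({}, 0) \<rparr>"

definition delta :: "int ^ 'n \<Rightarrow> 'n::finite lamp" where
  "delta x = ({x}, 0)"

end

theory Submission
  imports Defs "HOL-Library.List_Lexorder"
begin

text \<open>An automorphism \<phi> maps the torsion part \<Sigma> to itself, hence induces a bijection B of the
  quotient Z^k. Since ({}, a) \<delta>_0 = \<delta>_a ({}, a), the image \<phi>(\<delta>_a) is the
  translate of P = supp \<phi>(\<delta>_0) by B(a); so \<phi> maps the lamp configuration s to the mod-2
  sumset of B(s) and P. Surjectivity yields a finite s whose sumset is {0}. In a translation
  invariant linear order of Z^k, the sum of the maxima of B(s) and P has a unique
  representation and so survives mod 2, and likewise the sum of the minima; both therefore
  equal 0, which forces max P = min P.\<close>

definition coord_list :: "'n::finite list" where
  "coord_list = (SOME xs. set xs = UNIV)"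

lemma set_coord_list [simp]: "set (coord_list :: 'n::finite list) = UNIV"
proof -
  obtain xs :: "'n list" where "set xs = UNIV"
    using finite_list[of "UNIV :: 'n set"] by auto
  then show ?thesis
    unfolding coord_list_def by (rule someI)
qed

text \<open>Lexicographic comparison of coordinates (in a fixed enumeration of the index type) is a
  translation invariant linear order on Z^k.\<close>

definition lex_key :: "int ^ 'n::finite \<Rightarrow> int list" where
  "lex_key v = map (\<lambda>i. v $ i) coord_list"

lemma lex_key_inject: "lex_key v = lex_key w \<longleftrightarrow> v = w"
  unfolding lex_key_def by (simp add: vec_eq_iff)

lemma map_add_less_map_add_iff:
  fixes f g h :: "'a \<Rightarrow> 'b::ordered_ab_group_add"
  shows "map (\<lambda>i. f i + h i) xs < map (\<lambda>i. g i + h i) xs \<longleftrightarrow> map f xs < map g xs"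
  by (induction xs) auto

lemma lex_key_add_le_iff: "lex_key (v + u) \<le> lex_key (w + u) \<longleftrightarrow> lex_key v \<le> lex_key w"
  unfolding order_le_less lex_key_inject
  by (simp add: lex_key_def map_add_less_map_add_iff)

lemma lex_key_add_eqD:
  assumes "lex_key a \<le> lex_key a'" "lex_key b \<le> lex_key b'" "a + b = a' + b'"
  shows "a = a' \<and> b = b'"
proof -
  have "lex_key (a + b) \<le> lex_key (a' + b)"
    using assms(1) lex_key_add_le_iff by blast
  moreover have "lex_key (a' + b) \<le> lex_key (a' + b')"
    using assms(2) lex_key_add_le_iff[of b a' b'] by (simp add: add.commute)
  ultimately have "lex_key (a + b) = lex_key (a' + b)"
    using assms(3) by simp
  then show ?thesis
    using assms(3) by (simp add: lex_key_inject)
qed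

lemma sum_of_maxima_unique:
  assumes "a0 \<in> S" "\<forall>a\<in>S. lex_key a \<le> lex_key a0"
    and "b0 \<in> P" "\<forall>b\<in>P. lex_key b \<le> lex_key b0"
  shows "{a\<in>S. a0 + b0 - a \<in> P} = {a0}"
  using assms lex_key_add_eqD[of _ a0 "a0 + b0 - _" b0] by fastforce

lemma sum_of_minima_unique:
  assumes "a0 \<in> S" "\<forall>a\<in>S. lex_key a0 \<le> lex_key a"
    and "b0 \<in> P" "\<forall>b\<in>P. lex_key b0 \<le> lex_key b"
  shows "{a\<in>S. a0 + b0 - a \<in> P} = {a0}"
  using assms lex_key_add_eqD[of a0 _ b0 "a0 + b0 - _"] by fastforce

text \<open>The support of the product of the indicator sums of S and P in the group ring
  Z_2[Z^k].\<close>

definition sumset_mod2 :: "'a::ab_group_add set \<Rightarrow> 'a set \<Rightarrow> 'a set" where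
  "sumset_mod2 S P = {z. odd (card {a\<in>S. z - a \<in> P})}"

lemma sumset_mod2_empty [simp]: "sumset_mod2 {} P = {}"
  by (simp add: sumset_mod2_def)

lemma sumset_mod2_insert:
  assumes "finite S" "b \<notin> S"
  shows "sumset_mod2 (insert b S) P = symdiff ((\<lambda>x. b + x) ` P) (sumset_mod2 S P)"
proof (rule Set.set_eqI)
  fix z
  have translate: "z \<in> (\<lambda>x. b + x) ` P \<longleftrightarrow> z - b \<in> P"
    by (auto intro: image_eqI[of z _ "z - b"])
  have "{a\<in>insert b S. z - a \<in> P}
      = (if z - b \<in> P then insert b {a\<in>S. z - a \<in> P} else {a\<in>S. z - a \<in> P})"
    by auto
  then have "card {a\<in>insert b S. z - a \<in> P}
      = (if z - b \<in> P then Suc (card {a\<in>S. z - a \<in> P}) else card {a\<in>S. z - a \<in> P})"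
    using assms by simp
  then show "z \<in> sumset_mod2 (insert b S) P \<longleftrightarrow> z \<in> symdiff ((\<lambda>x. b + x) ` P) (sumset_mod2 S P)"
    using translate by (auto simp: sumset_mod2_def symdiff_def)
qed

lemma obtain_max_of_finite:
  fixes f :: "'a \<Rightarrow> 'b::linorder"
  assumes "finite S" "S \<noteq> {}"
  obtains m where "m \<in> S" "\<forall>a\<in>S. f a \<le> f m"
proof -
  have "Max (f ` S) \<in> f ` S"
    using assms by simp
  then obtain m where "m \<in> S" "f m = Max (f ` S)"
    by (metis imageE)
  with assms that show thesis
    by simp
qed

lemma obtain_min_of_finite:
  fixes f :: "'a \<Rightarrow> 'b::linorder"
  assumes "finite S" "S \<noteq> {}"
  obtains m where "m \<in> S" "\<forall>a\<in>S. f m \<le> f a"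
proof -
  have "Min (f ` S) \<in> f ` S"
    using assms by simp
  then obtain m where "m \<in> S" "f m = Min (f ` S)"
    by (metis imageE)
  with assms that show thesis
    by simp
qed

lemma card_eq_1_if_sumset_mod2_singleton:
  fixes S P :: "(int ^ 'n::finite) set"
  assumes "finite S" "finite P" "sumset_mod2 S P = {c}"
  shows "card P = 1"
proof -
  have "S \<noteq> {}" "P \<noteq> {}"
    using assms(3) by (auto simp: sumset_mod2_def)
  then obtain aM bM am bm where
      aM: "aM \<in> S" "\<forall>a\<in>S. lex_key a \<le> lex_key aM" and
      bM: "bM \<in> P" "\<forall>b\<in>P. lex_key b \<le> lex_key bM" and
      am: "am \<in> S" "\<forall>a\<in>S. lex_key am \<le> lex_key a" and
      bm: "bm \<in> P" "\<forall>b\<in>P. lex_key bm \<le> lex_key b"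
    using assms(1,2) obtain_max_of_finite obtain_min_of_finite by metis
  have "{aM + bM, am + bm} \<subseteq> sumset_mod2 S P"
    using sum_of_maxima_unique[OF aM bM] sum_of_minima_unique[OF am bm]
    by (simp add: sumset_mod2_def)
  then have "am + bm = aM + bM"
    using assms(3) by simp
  then have "bm = bM"
    using lex_key_add_eqD[of am aM bm bM] aM am bM bm by blast
  then have "P = {bM}"
    using bM bm lex_key_inject by (metis antisym singleton_iff subsetI subset_antisym)
  then show ?thesis
    by simp
qed

lemma lamplighter_carrier: "g \<in> carrier lamplighter \<longleftrightarrow> finite (fst g)"
  by (simp add: lamplighter_def)

lemma lamplighter_mult:
  "g \<otimes>\<^bsub>lamplighter\<^esub> h = (symdiff (fst g) ((\<lambda>x. snd g + x) ` fst h), snd g + snd h)"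
  by (simp add: lamplighter_def)

lemma delta_carrier: "delta a \<in> carrier lamplighter"
  by (simp add: lamplighter_carrier delta_def)

lemma translation_carrier: "(({}, a) :: 'n::finite lamp) \<in> carrier lamplighter"
  by (simp add: lamplighter_carrier)

lemma lamplighter_idempotent:
  assumes "g \<otimes>\<^bsub>lamplighter\<^esub> g = g"
  shows "g = ({}, 0)"
proof -
  have "snd g = 0"
    using assms by (simp add: lamplighter_mult prod_eq_iff)
  with assms show ?thesis
    by (auto simp: lamplighter_mult symdiff_def prod_eq_iff)
qed

lemma lamplighter_square_eq_one_iff:
  "g \<otimes>\<^bsub>lamplighter\<^esub> g = ({}, 0) \<longleftrightarrow> snd (g :: 'n::finite lamp) = 0"
proof -
  have "snd g + snd g = 0 \<longleftrightarrow> snd g = 0"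
    by (auto simp: vec_eq_iff)
  then show ?thesis
    by (auto simp: lamplighter_mult symdiff_def)
qed

locale lamplighter_automorphism =
  fixes \<phi> :: "'n::finite lamp \<Rightarrow> 'n lamp"
  assumes iso: "\<phi> \<in> iso lamplighter lamplighter"
begin

lemma closed: "g \<in> carrier lamplighter \<Longrightarrow> \<phi> g \<in> carrier lamplighter"
  using iso by (auto simp: iso_def hom_def)

lemma mult:
  "g \<in> carrier lamplighter \<Longrightarrow> h \<in> carrier lamplighter
   \<Longrightarrow> \<phi> (g \<otimes>\<^bsub>lamplighter\<^esub> h) = \<phi> g \<otimes>\<^bsub>lamplighter\<^esub> \<phi> h"
  using iso by (auto simp: iso_def hom_def)

lemma bij: "bij_betw \<phi> (carrier lamplighter) (carrier lamplighter)"
  using iso by (simp add: iso_def)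

lemma inject:
  "g \<in> carrier lamplighter \<Longrightarrow> h \<in> carrier lamplighter \<Longrightarrow> \<phi> g = \<phi> h \<longleftrightarrow> g = h"
  using bij by (auto dest: bij_betw_imp_inj_on inj_onD)

lemma obtain_preimage:
  assumes "h \<in> carrier lamplighter"
  obtains g where "g \<in> carrier lamplighter" "\<phi> g = h"
  using bij assms by (metis bij_betw_imp_surj_on imageE)

lemma map_one: "\<phi> ({}, 0) = ({}, 0)"
proof (rule lamplighter_idempotent)
  have "(({}, 0) :: 'n lamp) \<otimes>\<^bsub>lamplighter\<^esub> ({}, 0) = ({}, 0)"
    by (simp add: lamplighter_mult symdiff_def)
  then show "\<phi> ({}, 0) \<otimes>\<^bsub>lamplighter\<^esub> \<phi> ({}, 0) = \<phi> ({}, 0)"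
    using mult[of "({}, 0)" "({}, 0)"] by (simp add: lamplighter_carrier)
qed

lemma snd_eq_0_iff:
  assumes "g \<in> carrier lamplighter"
  shows "snd (\<phi> g) = 0 \<longleftrightarrow> snd g = 0"
proof -
  have one: "(({}, 0) :: 'n lamp) \<in> carrier lamplighter"
    by (simp add: lamplighter_carrier)
  have "\<phi> g \<otimes>\<^bsub>lamplighter\<^esub> \<phi> g = ({}, 0) \<longleftrightarrow> g \<otimes>\<^bsub>lamplighter\<^esub> g = ({}, 0)"
    using mult[OF assms assms] inject[OF _ one, of "g \<otimes>\<^bsub>lamplighter\<^esub> g"] assms map_one
    by (simp add: lamplighter_carrier lamplighter_mult symdiff_def)
  then show ?thesis
    by (simp add: lamplighter_square_eq_one_iff)
qed

definition induced :: "int ^ 'n \<Rightarrow> int ^ 'n" where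
  "induced a = snd (\<phi> ({}, a))"

definition lamps0 :: "(int ^ 'n) set" where
  "lamps0 = fst (\<phi> (delta 0))"

lemma map_delta0: "\<phi> (delta 0) = (lamps0, 0)"
  using snd_eq_0_iff[OF delta_carrier] by (simp add: lamps0_def delta_def prod_eq_iff)

lemma finite_lamps0: "finite lamps0"
  using closed[OF delta_carrier[of 0]] by (simp add: lamplighter_carrier lamps0_def)

lemma map_delta: "\<phi> (delta a) = ((\<lambda>x. induced a + x) ` lamps0, 0)"
proof -
  obtain D where D: "\<phi> (delta a) = (D, 0)"
    using snd_eq_0_iff[OF delta_carrier] by (metis delta_def prod.collapse snd_conv)
  have "(({}, a) :: 'n lamp) \<otimes>\<^bsub>lamplighter\<^esub> delta 0 = delta a \<otimes>\<^bsub>lamplighter\<^esub> ({}, a)"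
    by (simp add: lamplighter_mult delta_def symdiff_def)
  then have "\<phi> ({}, a) \<otimes>\<^bsub>lamplighter\<^esub> \<phi> (delta 0) = \<phi> (delta a) \<otimes>\<^bsub>lamplighter\<^esub> \<phi> ({}, a)"
    using mult delta_carrier translation_carrier by metis
  then have "symdiff (fst (\<phi> ({}, a))) ((\<lambda>x. induced a + x) ` lamps0) = symdiff D (fst (\<phi> ({}, a)))"
    by (simp add: lamplighter_mult map_delta0 D induced_def)
  then have "D = (\<lambda>x. induced a + x) ` lamps0"
    unfolding symdiff_def by blast
  with D show ?thesis
    by simp
qed

lemma snd_map: "g \<in> carrier lamplighter \<Longrightarrow> snd (\<phi> g) = induced (snd g)"
proof -
  assume g: "g \<in> carrier lamplighter"
  then have lamps: "((fst g, 0) :: 'n lamp) \<in> carrier lamplighter"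
    by (simp add: lamplighter_carrier)
  have "g = (fst g, 0) \<otimes>\<^bsub>lamplighter\<^esub> ({}, snd g)"
    by (simp add: lamplighter_mult symdiff_def)
  then have "\<phi> g = \<phi> (fst g, 0) \<otimes>\<^bsub>lamplighter\<^esub> \<phi> ({}, snd g)"
    using mult[OF lamps translation_carrier] by metis
  moreover have "snd (\<phi> (fst g, 0)) = 0"
    using snd_eq_0_iff[OF lamps] by simp
  ultimately show ?thesis
    by (simp add: lamplighter_mult induced_def)
qed

lemma surj_induced: "surj induced"
proof -
  have "z \<in> range induced" for z
  proof -
    obtain g where "g \<in> carrier lamplighter" "\<phi> g = ({}, z)"
      using obtain_preimage[OF translation_carrier] .
    then show ?thesis
      using snd_map by (metis rangeI snd_conv)
  qed
  then show ?thesis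
    by blast
qed

lemma inj_induced: "inj induced"
proof (rule injI)
  fix a a' assume same: "induced a = induced a'"
  obtain u u' where u: "\<phi> ({}, a) = (u, induced a)" and u': "\<phi> ({}, a') = (u', induced a')"
    by (metis induced_def prod.collapse)
  have "finite u" "finite u'"
    using closed[OF translation_carrier[of a]] closed[OF translation_carrier[of a']] u u'
    by (simp_all add: lamplighter_carrier)
  then have "((symdiff u u', 0) :: 'n lamp) \<in> carrier lamplighter"
    by (simp add: lamplighter_carrier symdiff_def)
  then obtain g where g: "g \<in> carrier lamplighter" "\<phi> g = (symdiff u u', 0)"
    by (rule obtain_preimage)
  have "symdiff (symdiff u u') u' = u"
    unfolding symdiff_def by blast
  then have "\<phi> (g \<otimes>\<^bsub>lamplighter\<^esub> ({}, a')) = \<phi> ({}, a)"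
    using mult[OF g(1) translation_carrier] g(2) u u' same by (simp add: lamplighter_mult)
  moreover have "g \<otimes>\<^bsub>lamplighter\<^esub> ({}, a') \<in> carrier lamplighter"
    using g(1) by (simp add: lamplighter_carrier lamplighter_mult symdiff_def)
  ultimately have "g \<otimes>\<^bsub>lamplighter\<^esub> ({}, a') = ({}, a)"
    using inject translation_carrier by blast
  moreover have "snd g = 0"
    using snd_eq_0_iff[OF g(1)] g(2) by simp
  ultimately show "a = a'"
    by (simp add: lamplighter_mult)
qed

lemma map_lamps:
  assumes "finite s"
  shows "\<phi> (s, 0) = (sumset_mod2 (induced ` s) lamps0, 0)"
  using assms
proof (induction s rule: finite_induct)
  case empty
  then show ?case
    using map_one by simp
next
  case (insert a s)
  have "((insert a s, 0) :: 'n lamp) = delta a \<otimes>\<^bsub>lamplighter\<^esub> (s, 0)"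
    using insert.hyps by (auto simp: lamplighter_mult delta_def symdiff_def)
  then have "\<phi> (insert a s, 0) = \<phi> (delta a) \<otimes>\<^bsub>lamplighter\<^esub> \<phi> (s, 0)"
    using mult[OF delta_carrier] insert.hyps by (simp add: lamplighter_carrier)
  also have "\<dots> = (symdiff ((\<lambda>x. induced a + x) ` lamps0) (sumset_mod2 (induced ` s) lamps0), 0)"
    using insert.IH by (simp add: map_delta lamplighter_mult)
  also have "\<dots> = (sumset_mod2 (induced ` insert a s) lamps0, 0)"
    using insert.hyps inj_induced by (simp add: sumset_mod2_insert inj_image_mem_iff)
  finally show ?case .
qed

lemma card_lamps0: "card lamps0 = 1"
proof -
  obtain g where g: "g \<in> carrier lamplighter" "\<phi> g = delta 0"
    using obtain_preimage[OF delta_carrier] .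
  then have "g = (fst g, 0)" "finite (fst g)"
    using snd_eq_0_iff[OF g(1)] by (simp_all add: delta_def prod_eq_iff lamplighter_carrier)
  then have "sumset_mod2 (induced ` fst g) lamps0 = {0}"
    using map_lamps g(2) by (metis delta_def fst_conv)
  then show ?thesis
    using card_eq_1_if_sumset_mod2_singleton finite_lamps0 \<open>finite (fst g)\<close> by blast
qed

lemma bij_betw_deltas: "bij_betw \<phi> (range delta) (range delta)"
proof -
  obtain c where c: "lamps0 = {c}"
    using card_lamps0 card_1_singletonE by blast
  then have image: "\<phi> (delta a) = delta (induced a + c)" for a
    using map_delta[of a] by (simp add: delta_def)
  have "\<phi> ` range delta = range delta"
  proof
    show "\<phi> ` range delta \<subseteq> range delta"
      using image by auto
    show "range delta \<subseteq> \<phi> ` range delta"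
    proof
      fix d :: "'n lamp"
      assume "d \<in> range delta"
      then obtain z where "d = delta z"
        by blast
      moreover obtain y where "induced y = z - c"
        using surj_induced by (metis surjD)
      ultimately have "d = \<phi> (delta y)"
        using image by simp
      then show "d \<in> \<phi> ` range delta"
        by blast
    qed
  qed
  moreover have "inj_on \<phi> (range delta)"
    using inj_on_subset[OF bij_betw_imp_inj_on[OF bij]] delta_carrier by blast
  ultimately show ?thesis
    by (simp add: bij_betw_def)
qed

end

theorem lemma2p1:
  fixes \<phi> :: "'n::finite lamp \<Rightarrow> 'n lamp"
  assumes "\<phi> \<in> iso lamplighter lamplighter"
  shows "card (fst (\<phi> (delta 0))) = 1 \<and> snd (\<phi> (delta 0)) = 0
         \<and> bij_betw \<phi> (range delta) (range delta)"
proof -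
  interpret lamplighter_automorphism \<phi>
    using assms by unfold_locales
  show ?thesis
    using card_lamps0 map_delta0 bij_betw_deltas by simp
qed

end
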